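(* Let $\hat Q^\pi=\sum_{i=1}^n b^\pi_iK(\cdot,\omega_0^{(i)})$ with $\mathbf b^\pi=[\mathbf K+\lambda n\mathrm I-\gamma\mathbf C]^{-1}\mathbf r$ be the kernel TD estimator, let $\mathcal D^\pi=\hat Q^\pi-Q^\pi$, and let $\varepsilon_i=r(\omega_0^{(i)})+\gamma Q^\pi(\omega_1^{(i)})-Q^\pi(\omega_0^{(i)})$ be the Bellman residuals. Then $$\frac1n\sum_{i=1}^n\Big(\mathcal D^\pi(\omega_0^{(i)})^2-\gamma\,\mathcal D^\pi(\omega_0^{(i)})\mathcal D^\pi(\omega_1^{(i)})\Big)=\frac1n\sum_{i=1}^n\varepsilon_i\,\mathcal D^\pi(\omega_0^{(i)})-\lambda\langle\mathcal D^\pi,\hat Q^\pi\rangle_{\mathcal H}.$$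
   Context: Markov decision process $(\mathcal S,\mathcal A,P,r,\gamma)$ with compact convex $\mathcal S\subset\mathbb R^{d_s}$, $\mathcal A\subset\mathbb R^{d_a}$, transition density $P(\cdot\mid s,a)$, reward $r$, discount $\gamma\in[0,1]$; $\pi$ a fixed policy; $Q^\pi(s,a)=\mathbb E[\sum_{t\ge0}\gamma^tr(s_t,a_t)\mid s_0=s,a_0=a]$ along $a_t\sim\pi(\cdot\mid s_t)$, $s_{t+1}\sim P(\cdot\mid s_t,a_t)$; it satisfies $Q^\pi(s,a)=r(s,a)+\gamma\mathbb E_{s'\sim P(\cdot\mid s,a),a'\sim\pi(\cdot\mid s')}Q^\pi(s',a')$. $K$ is a symmetric positive definite kernel on $\mathcal S\times\mathcal A$ with $\max_\omega K(\omega,\omega)<\infty$, $\mathcal H$ its RKHS; standing assumption: $Q^\pi\in\mathcal H$ and $r\in\mathcal H$. $\lambda>0$. Data: i.i.d. for $i=1,\dots,n$: $s_0^{(i)}\sim\mu_0$, $a_0^{(i)}\sim\pi(\cdot\mid s_0^{(i)})$, $s_1^{(i)}\sim P(\cdot\mid s_0^{(i)},a_0^{(i)})$, $a_1^{(i)}\sim\pi(\cdot\mid s_1^{(i)})$; $\omega_j^{(i)}=(s_j^{(i)},a_j^{(i)})$. Matrices: $\mathbf K_{i,j}=K(\omega_0^{(i)},\omega_0^{(j)})$, $\mathbf C_{i,j}=K(\omega_1^{(i)},\omega_0^{(j)})$, $\mathbf r_i=r(\omega_0^{(i)})$ (with $\mathbf K+\lambda n\mathrm I-\gamma\mathbf C$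 invertible). *)

theory Defs
  imports "HOL-Analysis.Analysis"
begin

text \<open>RKHS in feature-map form: the RKHS H of the kernel K on the domain X is modelled
  as a real Hilbert space 'h with a feature map phi (phi w = K(.,w)) whose span is dense,
  K w w' = inner (phi w) (phi w'), and an element h of H is the function
  w \<mapsto> inner h (phi w) (reproducing property).\<close>

definition rkhs_eval :: "('z \<Rightarrow> 'h::real_inner) \<Rightarrow> 'h \<Rightarrow> 'z \<Rightarrow> real" where
  "rkhs_eval phi h w = inner h (phi w)"

definition is_rkhs_feature_map ::
  "'z set \<Rightarrow> ('z \<Rightarrow> 'z \<Rightarrow> real) \<Rightarrow> ('z \<Rightarrow> 'h::{real_inner,complete_space}) \<Rightarrow> bool" where
  "is_rkhs_feature_map X K phi \<longleftrightarrow>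
     (\<forall>w\<in>X. \<forall>w'\<in>X. K w w' = inner (phi w) (phi w')) \<and>
     closure (span (phi ` X)) = UNIV"

definition td_coeffs ::
  "('z \<Rightarrow> 'z \<Rightarrow> real) \<Rightarrow> real \<Rightarrow> real \<Rightarrow> ('n::finite \<Rightarrow> 'z) \<Rightarrow> ('n \<Rightarrow> 'z)
     \<Rightarrow> ('z \<Rightarrow> real) \<Rightarrow> real ^ 'n" where
  "td_coeffs K lam gam w0 w1 rf =
     (let Km = (\<chi> i j. K (w0 i) (w0 j));
          Cm = (\<chi> i j. K (w1 i) (w0 j));
          M  = Km + (lam * real CARD('n)) *\<^sub>R mat 1 - gam *\<^sub>R Cm;
          rv = (\<chi> i. rf (w0 i))
      in matrix_inv M *v rv)"

definition td_estimator ::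
  "('z \<Rightarrow> 'h::real_vector) \<Rightarrow> real ^ 'n::finite \<Rightarrow> ('n \<Rightarrow> 'z) \<Rightarrow> 'h" where
  "td_estimator phi b w0 = (\<Sum>i\<in>UNIV. (b $ i) *\<^sub>R phi (w0 i))"

end

theory Submission
  imports Defs
begin

text \<open>Row j of the linear system defining the coefficients b reads
  Qhat(w0 j) - gam Qhat(w1 j) = r(w0 j) - lam n b j. Subtracting the definition of eps j gives
  D(w0 j) - gam D(w1 j) = eps j - lam n b j for every Q; multiplying by D(w0 j) and summing,
  the reproducing property identifies the sum of b j D(w0 j) with the inner product of D and Qhat.\<close>

lemma matrix_inv_right:
  fixes A :: "'a::semiring_1 ^ 'n ^ 'm"
  assumes "invertible A"
  shows "A ** matrix_inv A = mat 1"
  using someI_ex[OF assms[unfolded invertible_def]] unfolding matrix_inv_def by blast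

lemma td_coeffs_row_equation:
  fixes w0 w1 :: "'n::finite \<Rightarrow> 'z" and K :: "'z \<Rightarrow> 'z \<Rightarrow> real" and rf :: "'z \<Rightarrow> real"
  assumes "invertible ((\<chi> i j. K (w0 i) (w0 j)) + (lam * real CARD('n)) *\<^sub>R mat 1
                        - gam *\<^sub>R (\<chi> i j. K (w1 i) (w0 j)))"
  defines "b \<equiv> td_coeffs K lam gam w0 w1 rf"
  shows "(\<Sum>i\<in>UNIV. K (w0 j) (w0 i) * b $ i) - gam * (\<Sum>i\<in>UNIV. K (w1 j) (w0 i) * b $ i)
           = rf (w0 j) - lam * real CARD('n) * b $ j"
proof -
  let ?n = "real CARD('n)" and ?Km = "\<chi> i j. K (w0 i) (w0 j)" and ?Cm = "\<chi> i j. K (w1 i) (w0 j)"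
  have "(?Km + (lam * ?n) *\<^sub>R mat 1 - gam *\<^sub>R ?Cm) *v b = (\<chi> i. rf (w0 i))"
    using matrix_inv_right[OF assms(1)]
    by (simp add: b_def td_coeffs_def matrix_vector_mul_assoc)
  moreover have "((lam * ?n) *\<^sub>R mat 1) *v b = (lam * ?n) *\<^sub>R b"
    by (metis scaleR_matrix_vector_assoc matrix_vector_mul_lid)
  moreover have "(gam *\<^sub>R ?Cm) *v b = gam *\<^sub>R (?Cm *v b)"
    by (rule scaleR_matrix_vector_assoc[symmetric])
  ultimately have system: "?Km *v b + (lam * ?n) *\<^sub>R b - gam *\<^sub>R (?Cm *v b) = (\<chi> i. rf (w0 i))"
    by (simp only: matrix_vector_mult_add_rdistrib matrix_vector_mult_diff_rdistrib)
  have "(?Km *v b) $ j + lam * ?n * b $ j - gam * (?Cm *v b) $ j = rf (w0 j)"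
    using arg_cong[where f = "\<lambda>v. v $ j", OF system]
    by (simp only: vector_add_component vector_minus_component vector_scaleR_component vec_lambda_beta
        real_scaleR_def)
  then show ?thesis
    by (simp add: matrix_vector_mult_def algebra_simps)
qed

lemma rkhs_eval_td_estimator:
  "rkhs_eval phi (td_estimator phi b w0) w = (\<Sum>i\<in>UNIV. b $ i * inner (phi (w0 i)) (phi w))"
  by (simp add: rkhs_eval_def td_estimator_def inner_sum_left)

lemma inner_td_estimator_right:
  "inner h (td_estimator phi b w0) = (\<Sum>i\<in>UNIV. b $ i * rkhs_eval phi h (w0 i))"
  by (simp add: rkhs_eval_def td_estimator_def inner_sum_right)

lemma rkhs_eval_diff: "rkhs_eval phi (f - g) w = rkhs_eval phi f w - rkhs_eval phi g w"
  by (simp add: rkhs_eval_def inner_diff_left)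

lemma td_estimator_sample_equation:
  fixes w0 w1 :: "'n::finite \<Rightarrow> 'z" and K :: "'z \<Rightarrow> 'z \<Rightarrow> real" and rf :: "'z \<Rightarrow> real"
    and phi :: "'z \<Rightarrow> 'h::real_inner"
  assumes kernel: "\<And>w w'. w \<in> X \<Longrightarrow> w' \<in> X \<Longrightarrow> K w w' = inner (phi w) (phi w')"
    and "\<And>i. w0 i \<in> X" "\<And>i. w1 i \<in> X"
    and "invertible ((\<chi> i j. K (w0 i) (w0 j)) + (lam * real CARD('n)) *\<^sub>R mat 1
                     - gam *\<^sub>R (\<chi> i j. K (w1 i) (w0 j)))"
  defines "b \<equiv> td_coeffs K lam gam w0 w1 rf"
  shows "rkhs_eval phi (td_estimator phi b w0) (w0 j)
           - gam * rkhs_eval phi (td_estimator phi b w0) (w1 j)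
         = rf (w0 j) - lam * real CARD('n) * b $ j"
proof -
  have "rkhs_eval phi (td_estimator phi b w0) w = (\<Sum>i\<in>UNIV. K w (w0 i) * b $ i)" if "w \<in> X" for w
    using that assms(2) by (simp add: rkhs_eval_td_estimator kernel inner_commute mult.commute)
  then show ?thesis
    using td_coeffs_row_equation[OF assms(4)] assms(2,3) by (simp add: b_def)
qed

lemma sum_residual_identity:
  fixes d0 d1 e c :: "'i \<Rightarrow> real"
  assumes "\<And>j. d0 j - gam * d1 j = e j - lam * c j"
  shows "(\<Sum>j\<in>I. (d0 j)\<^sup>2 - gam * d0 j * d1 j) = (\<Sum>j\<in>I. e j * d0 j) - lam * (\<Sum>j\<in>I. c j * d0 j)"
proof -
  have "(d0 j)\<^sup>2 - gam * d0 j * d1 j = e j * d0 j - lam * (c j * d0 j)" for j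
    using arg_cong[OF assms[of j], of "\<lambda>x. x * d0 j"] by (simp add: algebra_simps power2_eq_square)
  then show ?thesis
    by (simp add: sum_subtractf sum_distrib_left)
qed

theorem proposition2:
  fixes S :: "(real ^ 'ds) set" and A :: "(real ^ 'da) set"
    and K :: "((real ^ 'ds) \<times> (real ^ 'da)) \<Rightarrow> ((real ^ 'ds) \<times> (real ^ 'da)) \<Rightarrow> real"
    and phi :: "((real ^ 'ds) \<times> (real ^ 'da)) \<Rightarrow> 'h::{real_inner,complete_space}"
    and Q r :: 'h
    and gam lam :: real
    and w0 w1 :: "'n::finite \<Rightarrow> (real ^ 'ds) \<times> (real ^ 'da)"
  assumes "compact S" "convex S" "compact A" "convex A"
    and feat: "is_rkhs_feature_map (S \<times> A) K phi"
    and "bounded ((\<lambda>w. K w w) ` (S \<times> A))"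
    and "0 \<le> gam" "gam \<le> 1" "0 < lam"
    and "\<And>i. w0 i \<in> S \<times> A" "\<And>i. w1 i \<in> S \<times> A"
    and inv: "invertible ((\<chi> i j. K (w0 i) (w0 j)) + (lam * real CARD('n)) *\<^sub>R mat 1
                          - gam *\<^sub>R (\<chi> i j. K (w1 i) (w0 j)))"
  defines "Qhat \<equiv> td_estimator phi (td_coeffs K lam gam w0 w1 (rkhs_eval phi r)) w0"
    and "D \<equiv> td_estimator phi (td_coeffs K lam gam w0 w1 (rkhs_eval phi r)) w0 - Q"
    and "eps \<equiv> (\<lambda>i. rkhs_eval phi r (w0 i) + gam * rkhs_eval phi Q (w1 i) - rkhs_eval phi Q (w0 i))"
  shows "(1 / real CARD('n)) * (\<Sum>i\<in>UNIV. (rkhs_eval phi D (w0 i))\<^sup>2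
              - gam * rkhs_eval phi D (w0 i) * rkhs_eval phi D (w1 i))
         = (1 / real CARD('n)) * (\<Sum>i\<in>UNIV. eps i * rkhs_eval phi D (w0 i))
           - lam * inner D Qhat"
proof -
  let ?n = "real CARD('n)"
  define b where "b = td_coeffs K lam gam w0 w1 (rkhs_eval phi r)"
  have kernel: "\<And>w w'. w \<in> S \<times> A \<Longrightarrow> w' \<in> S \<times> A \<Longrightarrow> K w w' = inner (phi w) (phi w')"
    using feat unfolding is_rkhs_feature_map_def by blast
  have residual: "rkhs_eval phi D (w0 j) - gam * rkhs_eval phi D (w1 j) = eps j - lam * ?n * b $ j"
    for j
    using td_estimator_sample_equation[OF kernel assms(10,11) inv, of "rkhs_eval phi r" j]
    unfolding D_def eps_def b_def rkhs_eval_diff by (simp add: algebra_simps)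
  have "inner D Qhat = (\<Sum>j\<in>UNIV. b $ j * rkhs_eval phi D (w0 j))"
    unfolding Qhat_def b_def by (rule inner_td_estimator_right)
  then have "(\<Sum>i\<in>UNIV. (rkhs_eval phi D (w0 i))\<^sup>2
                - gam * rkhs_eval phi D (w0 i) * rkhs_eval phi D (w1 i))
      = (\<Sum>i\<in>UNIV. eps i * rkhs_eval phi D (w0 i)) - lam * ?n * inner D Qhat"
    using sum_residual_identity[of "\<lambda>j. rkhs_eval phi D (w0 j)"] residual by simp
  then show ?thesis
    by (simp add: right_diff_distrib)
qed

end
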